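(* Let $P$ be a knot projection on $S^2$ (possibly reducible), and let $P_B$ be the knot projection obtained from $P$ by applying the move $B$ at every crossing of $P$. Then $P_B$ is reduced.
   Context: A knot projection is a closed curve in $S^2$ that is the image of an immersion $S^1\to S^2$ whose only singularities are finitely many transverse double points (crossings), up to isotopy of $S^2$. A crossing $c$ is reducible if the four corners of $S^2\setminus P$ at $c$ do not lie in four pairwise distinct regions; $P$ is reduced if it has no reducible crossing. Move $B$ at a crossing $c$: choose an orientation of $P$; in a small disk around $c$, $P$ is drawn as two arcs, both traversed from left to right, crossing once (shadow of the braid generator $\sigma_1$ with the braid running horizontally); $B$ replaces this by two arcs with the same endpoints, both traversed left to right, crossing three times in succession (shadow of $\sigma_1^3$, forming two consecutive bigons), unchanged outside the disk. This is independent of the chosen orientation. *)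

theory Defs
  imports Main
begin

text \<open>Knot projections on S^2 are encoded as combinatorial maps (rotation systems):
  a finite set D of darts (half-edges), a rotation sigma (counterclockwise successor of a
  dart around its crossing; its orbits are the crossings) and a fixed-point-free involution
  alpha (the other end of the edge).  Regions of S^2 minus P are the orbits of the face
  permutation sigma o alpha; the corner between x and sigma x lies in the face orbit of sigma x.
  The curve runs straight through a crossing: from the outgoing dart d it reaches the dart
  alpha d and leaves through the opposite dart sigma^2 (alpha d).\<close>

definition orb :: "('a \<Rightarrow> 'a) \<Rightarrow> 'a \<Rightarrow> 'a set" where
  "orb f x = range (\<lambda>n. (f ^^ n) x)"

definition orbits :: "('a \<Rightarrow> 'a) \<Rightarrow> 'a set \<Rightarrow> 'a set set" where
  "orbits f D = orb f ` D"

definition traversal :: "('a \<Rightarrow> 'a) \<Rightarrow> ('a \<Rightarrow> 'a) \<Rightarrow> 'a \<Rightarrow> 'a" where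
  "traversal sigma alpha d = (sigma ^^ 2) (alpha d)"

text \<open>A knot projection with at least one crossing: connected 4-valent map on the sphere
  (Euler characteristic 2) whose straight-ahead traversal is a single closed curve
  (exactly two traversal orbits, one per direction).\<close>
definition knot_projection_map :: "'a set \<Rightarrow> ('a \<Rightarrow> 'a) \<Rightarrow> ('a \<Rightarrow> 'a) \<Rightarrow> bool" where
  "knot_projection_map D sigma alpha \<longleftrightarrow>
     finite D \<and> D \<noteq> {} \<and> bij_betw sigma D D \<and> bij_betw alpha D D \<and>
     (\<forall>d\<in>D. alpha (alpha d) = d \<and> alpha d \<noteq> d \<and>
             (sigma ^^ 4) d = d \<and> sigma d \<noteq> d \<and> (sigma ^^ 2) d \<noteq> d) \<and>
     (\<forall>d\<in>D. \<forall>e\<in>D. (d, e) \<in> ({(x, sigma x) | x. x \<in> D} \<union> {(x, alpha x) | x. x \<in> D})\<^sup>*) \<and>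
     int (card (orbits sigma D)) - int (card (orbits alpha D))
       + int (card (orbits (sigma \<circ> alpha) D)) = 2 \<and>
     card (orbits (traversal sigma alpha) D) = 2"

text \<open>Reduced: at every crossing the four corners lie in four pairwise distinct regions.\<close>
definition reduced_map :: "'a set \<Rightarrow> ('a \<Rightarrow> 'a) \<Rightarrow> ('a \<Rightarrow> 'a) \<Rightarrow> bool" where
  "reduced_map D sigma alpha \<longleftrightarrow>
     (\<forall>d\<in>D. \<forall>i<(4::nat). \<forall>j<(4::nat). i \<noteq> j \<longrightarrow>
        orb (sigma \<circ> alpha) ((sigma ^^ i) d) \<noteq> orb (sigma \<circ> alpha) ((sigma ^^ j) d))"

text \<open>Move B at every crossing, w.r.t. an orientation Or (the set of darts along which the
  oriented curve leaves a crossing; Or is one of the two traversal orbits).  At each crossing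
  the distinguished dart s is the outgoing dart whose ccw successor is incoming; with
  d0 = s, d1 = sigma s, d2 = sigma^2 s, d3 = sigma^3 s the crossing looks like
  TR = d0, TL = d1, BL = d2, BR = d3, both strands going left to right.  It is replaced by
  three crossings c1, c2, c3 (left to right), with darts (NE, NW, SW, SE):
  c1 = (Inr(s,0), Inl d1, Inl d2, Inr(s,1)), c2 = (Inr(s,2), Inr(s,3), Inr(s,4), Inr(s,5)),
  c3 = (Inl d0, Inr(s,6), Inr(s,7), Inl d3); new edges
  (s,0)-(s,3), (s,1)-(s,4), (s,2)-(s,6), (s,5)-(s,7).\<close>
definition B_darts :: "'a set \<Rightarrow> ('a \<Rightarrow> 'a) \<Rightarrow> 'a set \<Rightarrow> ('a + 'a \<times> nat) set" where
  "B_darts D sigma Or =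
     Inl ` D \<union> {Inr (s, k) | s k. s \<in> D \<and> s \<in> Or \<and> sigma s \<notin> Or \<and> k < 8}"

definition B_sigma :: "('a \<Rightarrow> 'a) \<Rightarrow> 'a set \<Rightarrow> ('a + 'a \<times> nat) \<Rightarrow> ('a + 'a \<times> nat)" where
  "B_sigma sigma Or x = (case x of
      Inl d \<Rightarrow>
        (if d \<in> Or then (if sigma d \<in> Or then Inl (sigma d) else Inr (d, 6))
         else (if sigma d \<in> Or then Inr ((sigma ^^ 2) d, 1) else Inl (sigma d)))
    | Inr (s, k) \<Rightarrow>
        (if k = 0 then Inl (sigma s)
         else if k = 1 then Inr (s, 0)
         else if k = 2 then Inr (s, 3)
         else if k = 3 then Inr (s, 4)
         else if k = 4 then Inr (s, 5)
         else if k = 5 then Inr (s, 2)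
         else if k = 6 then Inr (s, 7)
         else if k = 7 then Inl ((sigma ^^ 3) s)
         else Inr (s, k)))"

definition B_alpha :: "('a \<Rightarrow> 'a) \<Rightarrow> ('a + 'a \<times> nat) \<Rightarrow> ('a + 'a \<times> nat)" where
  "B_alpha alpha x = (case x of
      Inl d \<Rightarrow> Inl (alpha d)
    | Inr (s, k) \<Rightarrow> Inr (s,
        (if k = 0 then 3 else if k = 3 then 0
         else if k = 1 then 4 else if k = 4 then 1
         else if k = 2 then 6 else if k = 6 then 2
         else if k = 5 then 7 else if k = 7 then 5 else k)))"

end

theory Submission
  imports Defs
begin

text \<open>Give every dart an Alexander number \<open>A\<close>: a function of the regions of \<open>S\<^sup>2 \<setminus> P\<close> that
  jumps by \<open>1\<close> across each strand, with the sign given by the orientation.  It exists because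
  the projection lies on the sphere: a function on oriented edges summing to zero around every
  vertex is the increment of a function on faces, which follows by induction on the number of
  edges, contracting a non-loop edge or deleting a loop that bounds a monogon.

  At a crossing of \<open>P\<close> the four regions have Alexander numbers \<open>a, a + 1, a, a - 1\<close>.  The
  left and right regions may coincide, but those above and below never do.  Each of the three
  crossings created by move \<open>B\<close> sees the regions above and below together with two of: the
  left region, the right region, the two new bigons, but never both the left and the right one.
  So its four corners lie in four distinct regions of \<open>P\<^sub>B\<close>.\<close>

section \<open>Orbits of permutations of a finite set\<close>

definition perm_on :: "('a \<Rightarrow> 'a) \<Rightarrow> 'a set \<Rightarrow> bool" where
  "perm_on f D \<longleftrightarrow> finite D \<and> f ` D \<subseteq> D \<and> inj_on f D"

lemma orb_self: "x \<in> orb f x"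
  unfolding orb_def by (metis funpow_0 rangeI)

lemma orb_step: "y \<in> orb f x \<Longrightarrow> f y \<in> orb f x"
proof -
  assume "y \<in> orb f x"
  then obtain n where "y = (f ^^ n) x" unfolding orb_def by auto
  hence "f y = (f ^^ Suc n) x" by simp
  thus ?thesis unfolding orb_def by blast
qed

lemma orb_subset_if_closed:
  assumes "x \<in> S" and "\<And>y. y \<in> S \<Longrightarrow> f y \<in> S"
  shows "orb f x \<subseteq> S"
proof
  fix y assume "y \<in> orb f x"
  then obtain n where "y = (f ^^ n) x" unfolding orb_def by auto
  moreover have "(f ^^ n) x \<in> S" for n by (induction n) (auto simp: assms)
  ultimately show "y \<in> S" by simp
qed

lemma orb_subset_of_mem: "y \<in> orb f x \<Longrightarrow> orb f y \<subseteq> orb f x"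
  by (rule orb_subset_if_closed) (auto intro: orb_step)

lemma orb_invariant:
  assumes "y \<in> S" and "\<And>z. z \<in> S \<Longrightarrow> f z \<in> S" and "\<And>z. z \<in> S \<Longrightarrow> F (f z) = F z"
    and "w \<in> orb f y"
  shows "F w = F y"
proof -
  have "orb f y \<subseteq> {w\<in>S. F w = F y}" by (rule orb_subset_if_closed) (auto simp: assms)
  thus ?thesis using assms(4) by auto
qed

lemma orb_cong:
  assumes "x \<in> S" and "\<And>y. y \<in> S \<Longrightarrow> f y \<in> S" and "\<And>y. y \<in> S \<Longrightarrow> f y = g y"
  shows "orb f x = orb g x"
proof -
  have "(f ^^ n) x = (g ^^ n) x \<and> (f ^^ n) x \<in> S" for n
  proof (induction n)
    case (Suc n) thus ?case using assms by auto
  qed (simp add: assms)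
  thus ?thesis unfolding orb_def by auto
qed

lemma orbits_cong:
  assumes "\<And>y. y \<in> S \<Longrightarrow> f y \<in> S" and "\<And>y. y \<in> S \<Longrightarrow> f y = g y"
  shows "orbits f S = orbits g S"
  unfolding orbits_def using orb_cong[of _ S f g] assms by (auto intro!: image_cong)

lemma perm_on_funpow_in: "perm_on f D \<Longrightarrow> x \<in> D \<Longrightarrow> (f ^^ n) x \<in> D"
  unfolding perm_on_def by (induction n) auto

lemma perm_on_orb_subset: "perm_on f D \<Longrightarrow> x \<in> D \<Longrightarrow> orb f x \<subseteq> D"
  by (rule orb_subset_if_closed) (auto simp: perm_on_def)

text \<open>Pigeonhole gives \<open>i < j\<close> with \<open>f\<^sup>i x = f\<^sup>j x\<close>; injectivity cancels \<open>f\<^sup>i\<close>.\<close>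
lemma perm_on_funpow_return:
  assumes p: "perm_on f D" and x: "x \<in> D"
  shows "\<exists>m>0. (f ^^ m) x = x"
proof -
  have fin: "finite D" and inj: "inj_on f D" using p by (auto simp: perm_on_def)
  have "\<not> inj_on (\<lambda>n. (f ^^ n) x) {0..card D}"
  proof
    assume "inj_on (\<lambda>n. (f ^^ n) x) {0..card D}"
    moreover have "(\<lambda>n. (f ^^ n) x) ` {0..card D} \<subseteq> D" using perm_on_funpow_in[OF p x] by auto
    ultimately have "card {0..card D} \<le> card D" using card_inj_on_le fin by blast
    thus False by simp
  qed
  then obtain i j where "i < j" and ij: "(f ^^ i) x = (f ^^ (i + (j - i))) x"
    unfolding inj_on_def by (metis add_diff_inverse_nat less_imp_le_nat linorder_neqE_nat not_le)
  have "(f ^^ i) x = (f ^^ (i + k)) x \<Longrightarrow> x = (f ^^ k) x" for i k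
  proof (induction i)
    case (Suc i)
    have "(f ^^ i) x \<in> D" "(f ^^ (i + k)) x \<in> D" using perm_on_funpow_in[OF p x] by auto
    thus ?case using Suc inj by (simp add: inj_on_def)
  qed simp
  thus ?thesis using ij \<open>i < j\<close> by (metis zero_less_diff)
qed

lemma perm_on_orb_sym:
  assumes p: "perm_on f D" and x: "x \<in> D" and y: "y \<in> orb f x"
  shows "x \<in> orb f y"
proof -
  obtain n where n: "y = (f ^^ n) x" using y unfolding orb_def by auto
  obtain m where m: "m > 0" "(f ^^ m) x = x" using perm_on_funpow_return[OF p x] by auto
  have period: "(f ^^ (m * k)) x = x" for k
    by (induction k) (auto simp: funpow_add m(2))
  have "n \<le> m * (n + 1)" using m(1) by (simp add: trans_le_add2)
  hence "(f ^^ (m * (n + 1) - n)) y = (f ^^ (m * (n + 1) - n + n)) x"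
    unfolding n funpow_add o_def by simp
  hence "(f ^^ (m * (n + 1) - n)) y = (f ^^ (m * (n + 1))) x"
    using \<open>n \<le> m * (n + 1)\<close> by simp
  thus ?thesis unfolding orb_def using period by (metis rangeI)
qed

lemma perm_on_orb_eq: "perm_on f D \<Longrightarrow> x \<in> D \<Longrightarrow> y \<in> orb f x \<Longrightarrow> orb f y = orb f x"
  by (meson perm_on_orb_sym orb_subset_of_mem subset_antisym)

lemma perm_on_orb_pred: "perm_on f D \<Longrightarrow> z \<in> D \<Longrightarrow> f z \<in> orb f y \<Longrightarrow> z \<in> orb f y"
  by (meson orb_self orb_step perm_on_orb_sym orb_subset_of_mem subsetD)

lemma card_eq_sum_card_orbits:
  assumes p: "perm_on f D"
  shows "card D = (\<Sum>C\<in>orbits f D. card C)"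
proof -
  have fin: "finite D" using p by (simp add: perm_on_def)
  have "\<Union>(orbits f D) = D"
    unfolding orbits_def using perm_on_orb_subset[OF p] orb_self by fast
  moreover have "card (\<Union>(orbits f D)) = (\<Sum>C\<in>orbits f D. card C)"
  proof (rule card_Union_disjoint)
    show "pairwise disjnt (orbits f D)"
      unfolding pairwise_def disjnt_def orbits_def
      by (smt (verit) disjoint_iff image_iff p perm_on_orb_eq)
    show "finite C" if "C \<in> orbits f D" for C
      using that perm_on_orb_subset[OF p] fin finite_subset unfolding orbits_def by blast
  qed
  ultimately show ?thesis by simp
qed

lemma card_orbits_pos: "finite D \<Longrightarrow> x \<in> D \<Longrightarrow> 1 \<le> card (orbits f D)"
  unfolding orbits_def by (metis One_nat_def Suc_leI card_gt_0_iff empty_iff finite_imageI image_eqI)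

section \<open>Surgery on cycles\<close>

definition cycle_delete :: "('a \<Rightarrow> 'a) \<Rightarrow> 'a \<Rightarrow> 'a \<Rightarrow> 'a" where
  "cycle_delete f z y = (if f y = z then f z else f y)"

lemma perm_on_cycle_delete:
  assumes p: "perm_on f D" and z: "z \<in> D"
  shows "perm_on (cycle_delete f z) (D - {z})"
proof -
  have m: "f ` D \<subseteq> D" and i: "inj_on f D" using p by (auto simp: perm_on_def)
  have "cycle_delete f z y \<in> D - {z}" if "y \<in> D - {z}" for y
    using that m z i unfolding cycle_delete_def inj_on_def by auto
  moreover have "inj_on (cycle_delete f z) (D - {z})"
    using i z unfolding cycle_delete_def inj_on_def by auto
  ultimately show ?thesis using p by (auto simp: perm_on_def)
qed

lemma orb_cycle_delete:
  assumes p: "perm_on f D" and z: "z \<in> D" and y: "y \<in> D" "y \<noteq> z"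
  shows "orb (cycle_delete f z) y = orb f y - {z}"
proof
  have inj: "inj_on f D" using p by (auto simp: perm_on_def)
  show "orb (cycle_delete f z) y \<subseteq> orb f y - {z}"
  proof (rule orb_subset_if_closed)
    fix w assume w: "w \<in> orb f y - {z}"
    have "w \<in> D" using w perm_on_orb_subset[OF p y(1)] by auto
    hence "f z \<noteq> z" if "f w = z" using that inj z w unfolding inj_on_def by auto
    thus "cycle_delete f z w \<in> orb f y - {z}"
      using w orb_step[of w f y] orb_step[of z f y] by (auto simp: cycle_delete_def)
  qed (use y orb_self in auto)
  show "orb f y - {z} \<subseteq> orb (cycle_delete f z) y"
  proof
    let ?O = "orb (cycle_delete f z) y"
    fix v assume v: "v \<in> orb f y - {z}"
    then obtain n where n: "v = (f ^^ n) y" unfolding orb_def by auto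
    have "((f ^^ n) y \<in> ?O \<or> (f ^^ n) y = z) \<and> ((f ^^ n) y = z \<longrightarrow> f z \<in> ?O)" for n
    proof (induction n)
      case 0 thus ?case using y orb_self by auto
    next
      case (Suc n)
      define w where "w = (f ^^ n) y"
      have fw: "(f ^^ Suc n) y = f w" by (simp add: w_def)
      show ?case
      proof (cases "w = z")
        case True thus ?thesis using Suc.IH fw unfolding w_def by (metis orb_step cycle_delete_def)
      next
        case False
        hence "w \<in> ?O" using Suc.IH w_def by auto
        moreover have "cycle_delete f z w = (if f w = z then f z else f w)"
          by (simp add: cycle_delete_def)
        ultimately show ?thesis using fw orb_step[of w "cycle_delete f z" y]
          by (cases "f w = z") auto
      qed
    qed
    thus "v \<in> ?O" using v n by auto
  qed
qed

lemma card_orbits_cycle_delete: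
  assumes p: "perm_on f D" and z: "z \<in> D"
  shows "card (orbits (cycle_delete f z) (D - {z})) =
           (if f z = z then card (orbits f D) - 1 else card (orbits f D))"
proof -
  have fin: "finite D" using p by (simp add: perm_on_def)
  have "orbits (cycle_delete f z) (D - {z}) = (\<lambda>C. C - {z}) ` orb f ` (D - {z})"
    unfolding orbits_def image_image using orb_cycle_delete[OF p z] by (auto intro!: image_cong)
  moreover have "inj_on (\<lambda>C. C - {z}) (orb f ` (D - {z}))"
  proof (rule inj_onI)
    fix C1 C2 assume C: "C1 \<in> orb f ` (D - {z})" "C2 \<in> orb f ` (D - {z})" "C1 - {z} = C2 - {z}"
    obtain u where u: "u \<in> D" "u \<noteq> z" "C1 = orb f u" using C(1) by auto
    obtain v where v: "v \<in> D" "C2 = orb f v" using C(2) by auto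
    have "u \<in> orb f v" using C(3) u v orb_self[of u f] by blast
    thus "C1 = C2" using perm_on_orb_eq[OF p v(1)] u v by simp
  qed
  ultimately have card: "card (orbits (cycle_delete f z) (D - {z})) = card (orb f ` (D - {z}))"
    by (simp add: card_image)
  have D: "orbits f D = insert (orb f z) (orb f ` (D - {z}))"
    unfolding orbits_def using z by blast
  show ?thesis
  proof (cases "f z = z")
    case True
    have "orb f z = {z}" using orb_self[of z f] orb_subset_if_closed[of z "{z}" f] True by auto
    moreover have "{z} \<notin> orb f ` (D - {z})" using orb_self by fastforce
    ultimately show ?thesis using card D True fin by simp
  next
    case False
    have "f z \<in> D - {z}" using p z False by (auto simp: perm_on_def)
    moreover have "orb f (f z) = orb f z" by (rule perm_on_orb_eq[OF p z orb_step[OF orb_self]])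
    ultimately show ?thesis using card D False by (metis image_eqI insert_absorb)
  qed
qed

definition cycle_merge :: "('a \<Rightarrow> 'a) \<Rightarrow> 'a \<Rightarrow> 'a \<Rightarrow> 'a \<Rightarrow> 'a" where
  "cycle_merge f a b y = (if y = a then f b else if y = b then f a else f y)"

context
  fixes f :: "'a \<Rightarrow> 'a" and D a b
  assumes p: "perm_on f D" and a: "a \<in> D" and b: "b \<in> D" and b_notin: "b \<notin> orb f a"
begin

private lemma a_notin: "a \<notin> orb f b"
  using b_notin perm_on_orb_sym[OF p b] by blast

lemma perm_on_cycle_merge: "perm_on (cycle_merge f a b) D"
proof -
  have "a \<noteq> b" using b_notin orb_self by metis
  thus ?thesis using p a b unfolding perm_on_def cycle_merge_def inj_on_def
    by (auto split: if_splits)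
qed

private lemma funpow_Suc_in_merged:
  assumes "u \<in> {a, b}" and "v \<in> {a, b}" and "u \<noteq> v"
    and start: "f u \<in> orb (cycle_merge f a b) a"
  shows "(f ^^ Suc n) u \<in> orb (cycle_merge f a b) a"
proof (induction n)
  case (Suc n)
  define w where "w = (f ^^ Suc n) u"
  have "w \<in> orb f u" unfolding orb_def w_def by blast
  hence "w \<noteq> v" using assms(1-3) b_notin a_notin by auto
  hence "w \<noteq> u \<Longrightarrow> cycle_merge f a b w = f w"
    using assms(1-3) by (auto simp: cycle_merge_def)
  hence "f w \<in> orb (cycle_merge f a b) a"
    using Suc orb_step[OF Suc] start unfolding w_def[symmetric] by (cases "w = u") auto
  thus ?case by (simp add: w_def)
qed (use start in simp)

lemma orb_cycle_merge: "orb (cycle_merge f a b) a = orb f a \<union> orb f b"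
proof
  show "orb (cycle_merge f a b) a \<subseteq> orb f a \<union> orb f b"
    by (rule orb_subset_if_closed)
      (use orb_self[of a f] orb_self[of b f] orb_step[of _ f a] orb_step[of _ f b]
        in \<open>auto simp: cycle_merge_def\<close>)
  let ?O = "orb (cycle_merge f a b) a"
  have ab: "a \<noteq> b" using b_notin orb_self by metis
  have fb: "f b \<in> ?O"
    using orb_step[OF orb_self, of "cycle_merge f a b" a] by (simp add: cycle_merge_def)
  have bO: "b \<in> ?O"
    using perm_on_funpow_return[OF p b] funpow_Suc_in_merged[of b a, OF _ _ _ fb] ab
    by (metis gr0_conv_Suc insertI1 insertI2 singletonI)
  have fa: "f a \<in> ?O"
    using orb_step[OF bO] ab by (simp add: cycle_merge_def)
  have "(f ^^ n) u \<in> ?O" if "u \<in> {a, b}" for u n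
    using that ab fa fb bO orb_self[of a "cycle_merge f a b"]
      funpow_Suc_in_merged[of a b, OF _ _ _ fa] funpow_Suc_in_merged[of b a, OF _ _ _ fb]
    by (cases n) auto
  thus "orb f a \<union> orb f b \<subseteq> ?O" unfolding orb_def by blast
qed

lemma orb_cycle_merge_other:
  assumes y: "y \<in> D" "y \<notin> orb f a \<union> orb f b"
  shows "orb (cycle_merge f a b) y = orb f y"
proof -
  have "w \<noteq> a \<and> w \<noteq> b" if "w \<in> orb f y" for w
    using that y perm_on_orb_sym[OF p y(1)] by blast
  thus ?thesis
    by (intro orb_cong[of y "orb f y"] orb_self) (auto simp: orb_step cycle_merge_def)
qed

lemma orb_cycle_merge_mem:
  "y \<in> orb f a \<union> orb f b \<Longrightarrow> orb (cycle_merge f a b) y = orb f a \<union> orb f b"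
  using perm_on_orb_eq[OF perm_on_cycle_merge a] orb_cycle_merge by metis

lemma card_orbits_cycle_merge:
  "card (orbits (cycle_merge f a b) D) = card (orbits f D) - 1"
proof -
  let ?U = "orb f a \<union> orb f b"
  have finO: "finite (orbits f D)" using p unfolding orbits_def perm_on_def by simp
  have mem_U: "y \<in> ?U \<longleftrightarrow> orb f y = orb f a \<or> orb f y = orb f b" if "y \<in> D" for y
    using perm_on_orb_eq[OF p a] perm_on_orb_eq[OF p b] orb_self[of y f] by blast
  have eq: "orbits (cycle_merge f a b) D = insert ?U (orbits f D - {orb f a, orb f b})"
  proof
    show "orbits (cycle_merge f a b) D \<subseteq> insert ?U (orbits f D - {orb f a, orb f b})"
      unfolding orbits_def using mem_U orb_cycle_merge_mem orb_cycle_merge_other by fastforce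
    show "insert ?U (orbits f D - {orb f a, orb f b}) \<subseteq> orbits (cycle_merge f a b) D"
      unfolding orbits_def using a mem_U orb_cycle_merge orb_cycle_merge_other
      by (auto simp: image_iff) (metis orb_self)+
  qed
  have ne: "orb f a \<noteq> orb f b" using b_notin orb_self[of b f] by auto
  have ins: "orb f a \<in> orbits f D" "orb f b \<in> orbits f D" using a b unfolding orbits_def by auto
  have "?U \<notin> orbits f D - {orb f a, orb f b}"
  proof
    assume "?U \<in> orbits f D - {orb f a, orb f b}"
    then obtain y where y: "y \<in> D" "?U = orb f y" "orb f y \<noteq> orb f a" unfolding orbits_def by auto
    have "a \<in> orb f y" using y(2) orb_self[of a f] by blast
    thus False using perm_on_orb_eq[OF p y(1)] y(3) by metis
  qed
  hence "card (orbits (cycle_merge f a b) D) = card (orbits f D) - 2 + 1"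
    using eq finO ins ne by (simp add: card_Diff_subset)
  moreover have "2 \<le> card (orbits f D)"
    using card_mono[OF finO, of "{orb f a, orb f b}"] ins ne by simp
  ultimately show ?thesis by simp
qed

end

section \<open>Face potentials on planar maps\<close>

definition comb_map :: "'a set \<Rightarrow> ('a \<Rightarrow> 'a) \<Rightarrow> ('a \<Rightarrow> 'a) \<Rightarrow> bool" where
  "comb_map D s a \<longleftrightarrow> perm_on s D \<and> (\<forall>z\<in>D. a z \<in> D \<and> a (a z) = z \<and> a z \<noteq> z)"

definition map_connected :: "'a set \<Rightarrow> ('a \<Rightarrow> 'a) \<Rightarrow> ('a \<Rightarrow> 'a) \<Rightarrow> bool" where
  "map_connected D s a \<longleftrightarrow>
     (\<forall>S. S \<subseteq> D \<longrightarrow> S \<noteq> {} \<longrightarrow> (\<forall>z\<in>S. s z \<in> S \<and> a z \<in> S) \<longrightarrow> S = D)"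

definition euler_char :: "'a set \<Rightarrow> ('a \<Rightarrow> 'a) \<Rightarrow> ('a \<Rightarrow> 'a) \<Rightarrow> int" where
  "euler_char D s a =
     int (card (orbits s D)) - int (card (orbits a D)) + int (card (orbits (s \<circ> a) D))"

text \<open>\<open>A\<close> is a function of the faces (it is invariant under \<open>s \<circ> a\<close>), and \<open>e z\<close> is its
  increment from the face of \<open>z\<close> to the face of \<open>s z\<close>.\<close>
definition face_potential ::
    "'a set \<Rightarrow> ('a \<Rightarrow> 'a) \<Rightarrow> ('a \<Rightarrow> 'a) \<Rightarrow> ('a \<Rightarrow> int) \<Rightarrow> ('a \<Rightarrow> int) \<Rightarrow> bool" where
  "face_potential D s a e A \<longleftrightarrow> (\<forall>z\<in>D. A (s z) = A z + e z \<and> A (s (a z)) = A z)"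

lemma map_connectedD:
  "map_connected D s a \<Longrightarrow> S \<subseteq> D \<Longrightarrow> S \<noteq> {} \<Longrightarrow> (\<And>z. z \<in> S \<Longrightarrow> s z \<in> S \<and> a z \<in> S)
    \<Longrightarrow> S = D"
  unfolding map_connected_def by blast

lemma orb_involution: "a (a z) = z \<Longrightarrow> orb a z = {z, a z}"
  by (intro equalityI orb_subset_if_closed) (auto intro: orb_self orb_step)

lemma comb_map_perm_alpha: "comb_map D s a \<Longrightarrow> perm_on a D"
  unfolding comb_map_def perm_on_def inj_on_def by (metis image_subsetI)

lemma comb_map_perm_face: "comb_map D s a \<Longrightarrow> perm_on (s \<circ> a) D"
  unfolding comb_map_def perm_on_def inj_on_def by (auto, metis)

lemma card_darts_eq_twice_edges:
  assumes m: "comb_map D s a"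
  shows "card D = 2 * card (orbits a D)"
proof -
  have "card C = 2" if C: "C \<in> orbits a D" for C
  proof -
    obtain z where z: "z \<in> D" "C = orb a z" using C unfolding orbits_def by auto
    moreover have "a (a z) = z" "a z \<noteq> z" using m z(1) by (auto simp: comb_map_def)
    ultimately have "C = {z, a z}" "a z \<noteq> z" using orb_involution[of a z] by auto
    thus ?thesis by simp
  qed
  thus ?thesis using card_eq_sum_card_orbits[OF comb_map_perm_alpha[OF m]] by simp
qed

lemma card_orbits_alpha_remove_edge:
  assumes m: "comb_map D s a" and x: "x \<in> D"
  shows "card (orbits a (D - {x, a x})) = card (orbits a D) - 1"
proof -
  have ai: "\<And>z. z \<in> D \<Longrightarrow> a z \<in> D \<and> a (a z) = z \<and> a z \<noteq> z" using m by (simp add: comb_map_def)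
  hence o: "\<And>z. z \<in> D \<Longrightarrow> orb a z = {z, a z}" using orb_involution by metis
  have "orbits a (D - {x, a x}) = orbits a D - {{x, a x}}"
  proof
    show "orbits a (D - {x, a x}) \<subseteq> orbits a D - {{x, a x}}"
      unfolding orbits_def using o by (auto simp: doubleton_eq_iff)
    show "orbits a D - {{x, a x}} \<subseteq> orbits a (D - {x, a x})"
    proof
      fix C assume C: "C \<in> orbits a D - {{x, a x}}"
      then obtain z where z: "z \<in> D" "C = {z, a z}" unfolding orbits_def using o by auto
      hence "z \<noteq> x" "z \<noteq> a x" using C ai[OF x] by auto
      thus "C \<in> orbits a (D - {x, a x})" using z o unfolding orbits_def by auto
    qed
  qed
  moreover have "{x, a x} \<in> orbits a D" using o[OF x] x unfolding orbits_def by (metis image_eqI)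
  moreover have "finite (orbits a D)" using m unfolding comb_map_def perm_on_def orbits_def by simp
  ultimately show ?thesis by simp
qed

lemma comb_map_remove_edge:
  assumes "comb_map D s a" and "x \<in> D" and "perm_on s' (D - {x, a x})"
  shows "comb_map (D - {x, a x}) s' a"
proof -
  have "z \<in> D - {x, a x} \<Longrightarrow> a z \<in> D - {x, a x}" for z
    using assms(1,2) unfolding comb_map_def by (metis Diff_iff insert_iff singletonD)
  thus ?thesis using assms unfolding comb_map_def by auto
qed

lemma euler_char_remove_edge:
  assumes m: "comb_map D s a" and x: "x \<in> D"
    and VF: "int (card (orbits s' (D - {x, a x}))) + int (card (orbits (s' \<circ> a) (D - {x, a x}))) + 1
             = int (card (orbits s D)) + int (card (orbits (s \<circ> a) D))"
  shows "euler_char (D - {x, a x}) s' a = euler_char D s a"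
proof -
  have "finite D" using m by (simp add: comb_map_def perm_on_def)
  hence "1 \<le> card (orbits a D)" by (rule card_orbits_pos[OF _ x])
  thus ?thesis using VF card_orbits_alpha_remove_edge[OF m x] unfolding euler_char_def by simp
qed

lemma face_potential_single_edge:
  assumes m: "comb_map D s a" and D: "D = {x, a x}"
    and e_alt: "\<forall>z\<in>D. e (a z) = - e z" and B: "\<forall>z\<in>D. B (s z) = B z + e z"
  shows "\<exists>A. face_potential D s a e A"
proof -
  have x: "x \<in> D" and ax: "a (a x) = x" "a x \<noteq> x" using D m by (auto simp: comb_map_def)
  have p: "perm_on s D" using m by (simp add: comb_map_def)
  hence sx: "s x \<in> {x, a x}" and sax: "s (a x) \<in> {x, a x}" using D by (auto simp: perm_on_def)
  have s_inj: "s x \<noteq> s (a x)" using p D ax(2) by (auto simp: perm_on_def inj_on_def)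
  have e_ax: "e (a x) = - e x" using e_alt x by simp
  show ?thesis
  proof (cases "s x = x")
    case True
    hence "s (a x) = a x" using s_inj sax by auto
    moreover have "e x = 0" using True B x by force
    ultimately have "face_potential D s a e (\<lambda>_. 0)"
      using True e_ax ax by (simp add: D face_potential_def)
    thus ?thesis by blast
  next
    case False
    hence "s x = a x" "s (a x) = x" using s_inj sx sax by auto
    hence "face_potential D s a e (\<lambda>z. if z = x then 0 else e x)"
      using e_ax ax by (simp add: D face_potential_def)
    thus ?thesis by blast
  qed
qed

locale edge_removal =
  fixes D :: "'a set" and s a :: "'a \<Rightarrow> 'a" and e B :: "'a \<Rightarrow> int" and x :: 'a
  assumes map: "comb_map D s a" and connected: "map_connected D s a"
    and euler: "euler_char D s a = 2"
    and e_alt: "\<forall>z\<in>D. e (a z) = - e z" and B: "\<forall>z\<in>D. B (s z) = B z + e z"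
    and x: "x \<in> D" and not_single_edge: "D \<noteq> {x, a x}"
begin

abbreviation "D' \<equiv> D - {x, a x}"

lemma perm_s: "perm_on s D" using map by (simp add: comb_map_def)
lemma alpha: "z \<in> D \<Longrightarrow> a z \<in> D \<and> a (a z) = z \<and> a z \<noteq> z" using map by (simp add: comb_map_def)
lemma finite_D: "finite D" using perm_s by (simp add: perm_on_def)
lemma ax_in: "a x \<in> D" using alpha[OF x] by simp
lemma aax: "a (a x) = x" using alpha[OF x] by simp
lemma ax_neq: "a x \<noteq> x" using alpha[OF x] by simp
lemma s_in: "z \<in> D \<Longrightarrow> s z \<in> D" using perm_s by (auto simp: perm_on_def)
lemma s_inj: "z \<in> D \<Longrightarrow> w \<in> D \<Longrightarrow> s z = s w \<Longrightarrow> z = w"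
  using perm_s by (auto simp: perm_on_def inj_on_def)
lemma e_ax: "e (a x) = - e x" using e_alt x by simp
lemma alpha_in_D': "z \<in> D' \<Longrightarrow> a z \<in> D'" using alpha aax by (metis Diff_iff insert_iff singletonD)
lemma D'_eq: "D' = D - {x} - {a x}" by blast
lemma ax_in_Dx: "a x \<in> D - {x}" using ax_in ax_neq by simp
lemma card_D': "card D' < card D" by (rule psubset_card_mono) (use finite_D x in auto)

text \<open>A face potential on the smaller map extends once its values next to the removed
  edge are consistent; the value on \<open>a x\<close> is forced by \<open>A (s (a (a x))) = A (a x)\<close>.\<close>
lemma face_potential_extend:
  assumes A': "face_potential D' s' a e A'"
    and A_D': "\<And>z. z \<in> D' \<Longrightarrow> A z = A' z" and A_x: "A x = A' v" and A_ax: "A (a x) = A' v + e x"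
    and s'_x: "\<And>z. z \<in> D' \<Longrightarrow> s z = x \<Longrightarrow> s' z = v"
    and s'_ax: "\<And>z. z \<in> D' \<Longrightarrow> s z = a x \<Longrightarrow> A' (s' z) = A' v + e x"
    and s'_other: "\<And>z. z \<in> D' \<Longrightarrow> s z \<noteq> x \<Longrightarrow> s z \<noteq> a x \<Longrightarrow> s' z = s z"
    and at_x: "A (s x) = A x + e x" "A (s (a x)) = A x"
  shows "face_potential D s a e A"
  unfolding face_potential_def
proof
  have step: "A (s z) = A' (s' z)" if z: "z \<in> D'" for z
  proof -
    consider "s z = x" | "s z = a x" | "s z \<in> D'" using s_in z by blast
    thus ?thesis
      by cases (use s'_x[OF z] s'_ax[OF z] s'_other[OF z] A_x A_ax A_D' in auto)
  qed
  fix z assume z: "z \<in> D"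
  consider "z = x" | "z = a x" | "z \<in> D'" using z by blast
  thus "A (s z) = A z + e z \<and> A (s (a z)) = A z"
  proof cases
    case 3
    thus ?thesis using A' alpha_in_D' step A_D' unfolding face_potential_def by metis
  qed (use at_x A_x A_ax aax e_ax in auto)
qed

end

locale edge_contraction = edge_removal +
  assumes non_loop: "a x \<notin> orb s x"
begin

abbreviation "s_merged \<equiv> cycle_merge s x (a x)"
abbreviation "s' \<equiv> cycle_delete (cycle_delete s_merged x) (a x)"
abbreviation "U \<equiv> orb s x \<union> orb s (a x)"

lemma x_notin: "x \<notin> orb s (a x)" using non_loop perm_on_orb_sym[OF perm_s ax_in] by blast

lemma not_both_fixed: "\<not> (s x = x \<and> s (a x) = a x)"
proof
  assume "s x = x \<and> s (a x) = a x"
  hence "{x, a x} = D" by (intro map_connectedD[OF connected]) (use aax x ax_in in auto)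
  thus False using not_single_edge by simp
qed

lemma sax_neq_x: "s (a x) \<noteq> x"
  using x_notin orb_step[OF orb_self, of s "a x"] by metis

lemma sx_neq_ax: "s x \<noteq> a x"
  using non_loop orb_step[OF orb_self, of s x] by metis

lemma e_x_if_sx: "s x = x \<Longrightarrow> e x = 0" using B x by force
lemma e_x_if_sax: "s (a x) = a x \<Longrightarrow> e x = 0" using B ax_in e_ax by force

text \<open>The darts that follow \<open>x\<close> and \<open>a x\<close> around the contracted vertex.\<close>
definition "succ_x = (if s (a x) = a x then s x else s (a x))"
definition "succ_ax = (if s x = x then s (a x) else s x)"

lemma s'_simp:
  assumes z: "z \<in> D'"
  shows "s' z = (if s z = x then succ_x else if s z = a x then succ_ax else s z)"
  using z not_both_fixed ax_neq
  by (auto simp: cycle_delete_def cycle_merge_def succ_x_def succ_ax_def)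

lemma perm_merged: "perm_on s_merged D" using perm_on_cycle_merge[OF perm_s x ax_in non_loop] .
lemma perm_merged_x: "perm_on (cycle_delete s_merged x) (D - {x})"
  using perm_on_cycle_delete[OF perm_merged x] .
lemma perm_s': "perm_on s' D'"
  by (subst D'_eq) (rule perm_on_cycle_delete[OF perm_merged_x ax_in_Dx])

lemma card_vertices: "card (orbits s' D') + 1 = card (orbits s D)"
proof -
  have "cycle_delete s_merged x (a x) \<noteq> a x"
    using not_both_fixed sx_neq_ax by (auto simp: cycle_delete_def cycle_merge_def)
  hence "card (orbits s' D') = card (orbits s_merged D)"
    using card_orbits_cycle_delete[OF perm_merged_x ax_in_Dx] card_orbits_cycle_delete[OF perm_merged x]
      sax_neq_x D'_eq by (simp add: cycle_merge_def)
  moreover have "1 \<le> card (orbits s D)" using card_orbits_pos[OF finite_D x] .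
  ultimately show ?thesis using card_orbits_cycle_merge[OF perm_s x ax_in non_loop] by simp
qed

lemma card_faces: "card (orbits (s' \<circ> a) D') = card (orbits (s \<circ> a) D)"
proof -
  let ?h = "cycle_delete (cycle_delete (s \<circ> a) x) (a x)"
  have pf: "perm_on (s \<circ> a) D" using comb_map_perm_face[OF map] .
  have pf_x: "perm_on (cycle_delete (s \<circ> a) x) (D - {x})" using perm_on_cycle_delete[OF pf x] .
  have "cycle_delete (s \<circ> a) x (a x) \<noteq> a x"
    using aax not_both_fixed sx_neq_ax by (auto simp: cycle_delete_def)
  hence "card (orbits ?h D') = card (orbits (s \<circ> a) D)"
    using card_orbits_cycle_delete[OF pf_x ax_in_Dx] card_orbits_cycle_delete[OF pf x] sax_neq_x D'_eq
    by simp
  moreover have "orbits (s' \<circ> a) D' = orbits ?h D'"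
  proof (rule orbits_cong)
    fix y assume y: "y \<in> D'"
    show "(s' \<circ> a) y \<in> D'" using perm_s' alpha_in_D'[OF y] by (auto simp: perm_on_def)
    show "(s' \<circ> a) y = ?h y"
      using s'_simp[OF alpha_in_D'[OF y]] aax not_both_fixed
      by (auto simp: cycle_delete_def succ_x_def succ_ax_def)
  qed
  ultimately show ?thesis by simp
qed

lemma comb_map': "comb_map D' s' a"
  using comb_map_remove_edge[OF map x perm_s'] .

lemma euler': "euler_char D' s' a = 2"
  using euler_char_remove_edge[OF map x] card_vertices card_faces euler by simp

lemma orb_s'_merged:
  assumes y: "y \<in> D'" "y \<in> U"
  shows "orb s' y = U - {x, a x}"
  using orb_cycle_delete[OF perm_merged_x ax_in_Dx] orb_cycle_delete[OF perm_merged x]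
    orb_cycle_merge_mem[OF perm_s x ax_in non_loop] y by auto

lemma s'_outside: "z \<in> D' \<Longrightarrow> z \<notin> U \<Longrightarrow> s' z = s z"
  using s'_simp perm_on_orb_pred[OF perm_s, of z x] perm_on_orb_pred[OF perm_s, of z "a x"]
    orb_self[of x s] orb_self[of "a x" s] by auto

lemma U_closed: "x \<in> U" "a x \<in> U" "\<And>z. z \<in> U \<Longrightarrow> s z \<in> U"
  using orb_self[of x s] orb_self[of "a x" s] orb_step[of _ s x] orb_step[of _ s "a x"] by auto

lemma connected': "map_connected D' s' a"
  unfolding map_connected_def
proof (intro allI impI)
  fix S' assume sub: "S' \<subseteq> D'" and ne: "S' \<noteq> {}" and cl: "\<forall>z\<in>S'. s' z \<in> S' \<and> a z \<in> S'"
  show "S' = D'"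
  proof (cases "S' \<inter> U = {}")
    case True
    have "s z \<in> S' \<and> a z \<in> S'" if "z \<in> S'" for z
      using that True cl sub s'_outside[of z] by (metis IntI empty_iff subsetD)
    hence "S' = D" by (intro map_connectedD[OF connected]) (use sub ne in blast)+
    thus ?thesis using sub x by auto
  next
    case False
    then obtain y where y: "y \<in> S'" "y \<in> U" by blast
    have "orb s' y \<subseteq> S'" by (rule orb_subset_if_closed) (use y cl in auto)
    hence U_sub: "U - {x, a x} \<subseteq> S'" using orb_s'_merged[of y] y sub by auto
    have "s z \<in> S' \<union> {x, a x} \<and> a z \<in> S' \<union> {x, a x}" if z: "z \<in> S' \<union> {x, a x}" for z
    proof (cases "z \<in> U")
      case True
      thus ?thesis using z U_closed(3) U_sub cl aax by blast
    next
      case False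
      hence "z \<in> S'" using z U_closed by auto
      thus ?thesis using False cl sub s'_outside by fastforce
    qed
    hence "S' \<union> {x, a x} = D" by (intro map_connectedD[OF connected]) (use sub x ax_in in auto)
    thus ?thesis using sub by auto
  qed
qed

text \<open>Shift \<open>B\<close> on the vertex of \<open>a x\<close> so that it stays a vertex potential after the merge.\<close>
definition "B' z = (if z \<in> orb s (a x) then B z + (B x - B (a x) + e x) else B z)"

lemma mem_orb_ax_iff: "z \<in> D \<Longrightarrow> s z \<in> orb s (a x) \<longleftrightarrow> z \<in> orb s (a x)"
  using perm_on_orb_pred[OF perm_s] orb_step by metis

lemma B'_sx: "B' (s x) = B x + e x"
  using mem_orb_ax_iff[OF x] x_notin B x by (simp add: B'_def)

lemma B'_sax: "B' (s (a x)) = B x"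
  using orb_step[OF orb_self, of s "a x"] B ax_in e_ax by (simp add: B'_def)

lemma B': "\<forall>z\<in>D'. B' (s' z) = B' z + e z"
proof
  fix z assume z: "z \<in> D'"
  have Bz: "B (s z) = B z + e z" using B z by simp
  have sz: "s z \<in> orb s (a x) \<longleftrightarrow> z \<in> orb s (a x)" using mem_orb_ax_iff z by simp
  have ax_orb: "a x \<in> orb s (a x)" using orb_self .
  consider "s z = x" | "s z = a x" | "s z \<noteq> x" "s z \<noteq> a x" by blast
  thus "B' (s' z) = B' z + e z"
  proof cases
    case 1
    hence "s' z = succ_x" "B' z = B z" "B (s z) = B x"
      using s'_simp[OF z] sz x_notin by (auto simp: B'_def)
    thus ?thesis using Bz B'_sx B'_sax e_x_if_sax by (auto simp: succ_x_def)
  next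
    case 2
    hence "s' z = succ_ax" "B' z = B z + (B x - B (a x) + e x)" "B (s z) = B (a x)"
      using s'_simp[OF z] sz ax_orb ax_neq by (auto simp: B'_def)
    thus ?thesis using Bz B'_sx B'_sax e_x_if_sx by (auto simp: succ_ax_def)
  qed (use s'_simp[OF z] sz Bz in \<open>auto simp: B'_def\<close>)
qed

text \<open>\<open>A' - B'\<close> is constant on the merged vertex, which contains \<open>s x\<close> and \<open>s (a x)\<close>.\<close>
lemma face_potential_across_x:
  assumes A': "face_potential D' s' a e A'"
    and nfix: "s x \<noteq> x" "s (a x) \<noteq> a x"
  shows "A' (s x) = A' (s (a x)) + e x"
proof -
  have in_D': "s x \<in> D'" "s (a x) \<in> D'" using s_in x ax_in nfix sx_neq_ax sax_neq_x by auto
  have "s (a x) \<in> orb s' (s x)" using orb_s'_merged in_D' U_closed by blast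
  moreover have "\<And>z. z \<in> D' \<Longrightarrow> s' z \<in> D'" using perm_s' by (auto simp: perm_on_def)
  moreover have "\<And>z. z \<in> D' \<Longrightarrow> A' (s' z) - B' (s' z) = A' z - B' z"
    using A' B' unfolding face_potential_def by auto
  ultimately have "A' (s (a x)) - B' (s (a x)) = A' (s x) - B' (s x)"
    using orb_invariant[of "s x" D' s' "\<lambda>z. A' z - B' z"] in_D' by blast
  thus ?thesis using B'_sx B'_sax by simp
qed

lemma face_potential_lift:
  assumes A': "face_potential D' s' a e A'"
  shows "\<exists>A. face_potential D s a e A"
proof -
  define A where "A z = (if z = x then A' succ_x else if z = a x then A' succ_x + e x else A' z)" for z
  have in_D': "s x \<noteq> x \<Longrightarrow> s x \<in> D'" "s (a x) \<noteq> a x \<Longrightarrow> s (a x) \<in> D'"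
    using s_in x ax_in sx_neq_ax sax_neq_x by auto
  have "face_potential D s a e A"
  proof (rule face_potential_extend[OF A', of A succ_x])
    fix z assume z: "z \<in> D'" "s z = a x"
    hence "s (a x) \<noteq> a x" using s_inj[of z "a x"] ax_in by auto
    moreover have "s' z = succ_ax" using s'_simp[OF z(1)] z(2) ax_neq by simp
    ultimately show "A' (s' z) = A' succ_x + e x"
      using face_potential_across_x[OF A'] e_x_if_sx by (cases "s x = x") (simp_all add: succ_x_def succ_ax_def)
  next
    show "A (s x) = A x + e x"
      using in_D' face_potential_across_x[OF A'] e_x_if_sx e_x_if_sax sx_neq_ax
      by (auto simp: A_def succ_x_def)
    show "A (s (a x)) = A x"
      using in_D' e_x_if_sax sax_neq_x not_both_fixed by (auto simp: A_def succ_x_def)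
  qed (use s'_simp ax_neq in \<open>auto simp: A_def\<close>)
  thus ?thesis by blast
qed

end

text \<open>\<open>s x = a x\<close> says that \<open>a x\<close> alone forms a face: \<open>x\<close> is a loop bounding a monogon.\<close>
locale loop_deletion = edge_removal +
  assumes monogon: "s x = a x" and one_vertex: "\<forall>y\<in>D. orb s y = D"
begin

abbreviation "s' \<equiv> cycle_delete (cycle_delete s x) (a x)"

lemma sax_neq_x: "s (a x) \<noteq> x"
proof
  assume "s (a x) = x"
  hence "orb s x \<subseteq> {x, a x}" by (intro orb_subset_if_closed) (use monogon in auto)
  thus False using one_vertex x ax_in not_single_edge by auto
qed

lemma sax_neq_ax: "s (a x) \<noteq> a x"
  using s_inj[OF ax_in x] monogon ax_neq by metis

lemma s_neq_ax: "z \<in> D' \<Longrightarrow> s z \<noteq> a x"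
  using s_inj[of z x] x monogon by auto

lemma s'_simp: "z \<in> D' \<Longrightarrow> s' z = (if s z = x then s (a x) else s z)"
  using monogon sax_neq_x s_neq_ax by (auto simp: cycle_delete_def)

lemma perm_s_x: "perm_on (cycle_delete s x) (D - {x})" using perm_on_cycle_delete[OF perm_s x] .
lemma perm_s': "perm_on s' D'"
  by (subst D'_eq) (rule perm_on_cycle_delete[OF perm_s_x ax_in_Dx])

lemma card_vertices: "card (orbits s' D') = card (orbits s D)"
  using card_orbits_cycle_delete[OF perm_s_x ax_in_Dx] card_orbits_cycle_delete[OF perm_s x]
    monogon ax_neq sax_neq_x sax_neq_ax D'_eq by (simp add: cycle_delete_def)

lemma card_faces: "card (orbits (s' \<circ> a) D') + 1 = card (orbits (s \<circ> a) D)"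
proof -
  let ?h = "cycle_delete (cycle_delete (s \<circ> a) (a x)) x"
  have pf: "perm_on (s \<circ> a) D" using comb_map_perm_face[OF map] .
  have pf_ax: "perm_on (cycle_delete (s \<circ> a) (a x)) (D - {a x})"
    using perm_on_cycle_delete[OF pf ax_in] .
  have x_in: "x \<in> D - {a x}" using x ax_neq by simp
  have "card (orbits ?h (D - {a x} - {x})) + 1 = card (orbits (s \<circ> a) D)"
    using card_orbits_cycle_delete[OF pf_ax x_in] card_orbits_cycle_delete[OF pf ax_in]
      card_orbits_pos[OF finite_D x, of "s \<circ> a"] aax monogon sax_neq_ax sax_neq_x
    by (simp add: cycle_delete_def)
  moreover have "D - {a x} - {x} = D'" by blast
  moreover have "orbits (s' \<circ> a) D' = orbits ?h D'"
  proof (rule orbits_cong)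
    fix y assume y: "y \<in> D'"
    show "(s' \<circ> a) y \<in> D'" using perm_s' alpha_in_D'[OF y] by (auto simp: perm_on_def)
    show "(s' \<circ> a) y = ?h y"
      using s'_simp[OF alpha_in_D'[OF y]] s_neq_ax[OF alpha_in_D'[OF y]] aax monogon sax_neq_ax
      by (auto simp: cycle_delete_def)
  qed
  ultimately show ?thesis by simp
qed

lemma comb_map': "comb_map D' s' a"
  using comb_map_remove_edge[OF map x perm_s'] .

lemma euler': "euler_char D' s' a = 2"
  using euler_char_remove_edge[OF map x] card_vertices card_faces euler by simp

lemma orb_s': "y \<in> D' \<Longrightarrow> orb s' y = D'"
  using orb_cycle_delete[OF perm_s_x ax_in_Dx, of y] orb_cycle_delete[OF perm_s x, of y] one_vertex
  by auto

lemma connected': "map_connected D' s' a"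
  unfolding map_connected_def
proof (intro allI impI)
  fix S' assume sub: "S' \<subseteq> D'" and ne: "S' \<noteq> {}" and cl: "\<forall>z\<in>S'. s' z \<in> S' \<and> a z \<in> S'"
  obtain y where y: "y \<in> S'" using ne by blast
  have "orb s' y \<subseteq> S'" by (rule orb_subset_if_closed) (use y cl in auto)
  thus "S' = D'" using orb_s'[of y] y sub by auto
qed

lemma B': "\<forall>z\<in>D'. B (s' z) = B z + e z"
proof -
  have "B (s (a x)) = B x" using B x ax_in monogon e_ax by force
  thus ?thesis using s'_simp B by auto
qed

lemma face_potential_lift:
  assumes A': "face_potential D' s' a e A'"
  shows "\<exists>A. face_potential D s a e A"
proof -
  define A where "A z = (if z = x then A' (s (a x)) else if z = a x then A' (s (a x)) + e x else A' z)"
    for z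
  have "s (a x) \<in> D'" using s_in[OF ax_in] sax_neq_x sax_neq_ax by simp
  hence "face_potential D s a e A"
    using s'_simp s_neq_ax monogon ax_neq
    by (intro face_potential_extend[OF A', of A "s (a x)"]) (auto simp: A_def)
  thus ?thesis by blast
qed

end

lemma one_vertex_if_all_loops:
  assumes m: "comb_map D s a" and c: "map_connected D s a" and loops: "\<forall>x\<in>D. a x \<in> orb s x"
    and y: "y \<in> D"
  shows "orb s y = D"
proof (rule map_connectedD[OF c])
  have p: "perm_on s D" using m by (simp add: comb_map_def)
  show "orb s y \<subseteq> D" using perm_on_orb_subset[OF p y] .
  fix z assume z: "z \<in> orb s y"
  hence "a z \<in> orb s z" using loops perm_on_orb_subset[OF p y] by auto
  thus "s z \<in> orb s y \<and> a z \<in> orb s y" using orb_step[OF z] orb_subset_of_mem[OF z] by auto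
qed (use orb_self[of y s] in auto)

text \<open>With one vertex, \<open>\<chi> = 2\<close> gives more faces than edges, so some face has a single dart.\<close>
lemma exists_monogon:
  assumes m: "comb_map D s a" and euler: "euler_char D s a = 2" and one_vertex: "card (orbits s D) = 1"
  shows "\<exists>y\<in>D. s (a y) = y"
proof (rule ccontr)
  assume "\<not> (\<exists>y\<in>D. s (a y) = y)"
  hence nfix: "\<forall>y\<in>D. (s \<circ> a) y \<noteq> y" by simp
  have pf: "perm_on (s \<circ> a) D" using comb_map_perm_face[OF m] .
  have "2 \<le> card C" if C: "C \<in> orbits (s \<circ> a) D" for C
  proof -
    obtain y where y: "y \<in> D" "C = orb (s \<circ> a) y" using C unfolding orbits_def by auto
    have "{y, (s \<circ> a) y} \<subseteq> C" using y orb_self orb_step[OF orb_self, of "s \<circ> a" y] by auto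
    moreover have "finite C" using y perm_on_orb_subset[OF pf] finite_subset m
      by (metis comb_map_def perm_on_def)
    ultimately have "card {y, (s \<circ> a) y} \<le> card C" by (simp add: card_mono)
    thus ?thesis using nfix y by (metis card_2_iff)
  qed
  hence "2 * card (orbits (s \<circ> a) D) \<le> card D"
    using card_eq_sum_card_orbits[OF pf] sum_mono[of "orbits (s \<circ> a) D" "\<lambda>_. 2" card] by simp
  thus False
    using card_darts_eq_twice_edges[OF m] euler one_vertex unfolding euler_char_def by simp
qed

text \<open>The dual of the vanishing of \<open>H\<^sup>1\<close> of the sphere: a function on oriented edges whose sum
  around every vertex vanishes (witnessed by the potential \<open>B\<close> along each vertex cycle) is
  the increment of a function on faces.\<close>
theorem planar_map_face_potential:
  fixes e B :: "'a \<Rightarrow> int"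
  assumes "comb_map D s a" and "map_connected D s a" and "euler_char D s a = 2"
    and "\<forall>z\<in>D. e (a z) = - e z" and "\<forall>z\<in>D. B (s z) = B z + e z"
  shows "\<exists>A. face_potential D s a e A"
  using assms
proof (induction "card D" arbitrary: D s B rule: less_induct)
  case less
  note hyps = less.prems
  show ?case
  proof (cases "\<exists>x\<in>D. D = {x, a x}")
    case True
    thus ?thesis using face_potential_single_edge hyps(1,4,5) by metis
  next
    case not_single: False
    show ?thesis
    proof (cases "\<exists>x\<in>D. a x \<notin> orb s x")
      case True
      then obtain x where x: "x \<in> D" "a x \<notin> orb s x" by blast
      interpret edge_contraction D s a e B x using hyps x not_single by unfold_locales auto
      show ?thesis
        using less.hyps[OF card_D' comb_map' connected' euler' _ B'] e_alt face_potential_lift by auto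
    next
      case False
      hence one_vertex: "\<forall>y\<in>D. orb s y = D"
        using one_vertex_if_all_loops[OF hyps(1,2)] by blast
      hence "card (orbits s D) = 1"
        using hyps(3) unfolding orbits_def euler_char_def by (cases "D = {}") (auto simp: image_constant)
      then obtain y where y: "y \<in> D" "s (a y) = y" using exists_monogon hyps(1,3) by blast
      have ay: "a y \<in> D" "a (a y) = y" using y hyps(1) by (auto simp: comb_map_def)
      interpret loop_deletion D s a e B "a y" using hyps y ay not_single one_vertex
        by unfold_locales auto
      show ?thesis
        using less.hyps[OF card_D' comb_map' connected' euler' _ B'] e_alt face_potential_lift by auto
    qed
  qed
qed

section \<open>Alexander numbering of a knot projection\<close>

text \<open>If \<open>r\<close> reverses \<open>T\<close>, then \<open>r z \<in> orb T z\<close> would make \<open>r\<close> fix the midpoint of the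
  \<open>T\<close>-path from \<open>z\<close> to \<open>r z\<close>, or map a dart to its \<open>T\<close>-successor.\<close>
lemma reversal_not_in_orb:
  assumes pT: "perm_on T D" and z: "z \<in> D"
    and r_in: "\<And>w. w \<in> D \<Longrightarrow> r w \<in> D" and r_nfix: "\<And>w. w \<in> D \<Longrightarrow> r w \<noteq> w"
    and r_neq_T: "\<And>w. w \<in> D \<Longrightarrow> r w \<noteq> T w"
    and reverses: "\<And>w. w \<in> D \<Longrightarrow> T (r (T w)) = r w"
  shows "r z \<notin> orb T z"
proof
  assume "r z \<in> orb T z"
  then obtain k where k: "r z = (T ^^ k) z" unfolding orb_def by auto
  have T_in: "\<And>w. w \<in> D \<Longrightarrow> T w \<in> D" and T_inj: "inj_on T D"
    using pT by (auto simp: perm_on_def)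
  have Tn_in: "\<And>n. (T ^^ n) z \<in> D" using perm_on_funpow_in[OF pT z] .
  have mirror: "n \<le> k \<Longrightarrow> r ((T ^^ n) z) = (T ^^ (k - n)) z" for n
  proof (induction n)
    case (Suc n)
    have "k - n = Suc (k - Suc n)" using Suc.prems by simp
    hence "T (r ((T ^^ Suc n) z)) = T ((T ^^ (k - Suc n)) z)"
      using reverses[OF Tn_in[of n]] Suc by simp
    thus ?case using T_inj r_in T_in Tn_in by (auto simp: inj_on_def)
  qed (simp add: k)
  show False
  proof (cases "even k")
    case True
    hence "r ((T ^^ (k div 2)) z) = (T ^^ (k div 2)) z" using mirror[of "k div 2"] by auto
    thus False using r_nfix[OF Tn_in] by simp
  next
    case False
    hence "k - k div 2 = Suc (k div 2)" by presburger
    hence "r ((T ^^ (k div 2)) z) = T ((T ^^ (k div 2)) z)" using mirror[of "k div 2"] by simp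
    thus False using r_neq_T[OF Tn_in] by simp
  qed
qed

definition alexander_numbering ::
    "'a set \<Rightarrow> ('a \<Rightarrow> 'a) \<Rightarrow> ('a \<Rightarrow> 'a) \<Rightarrow> 'a set \<Rightarrow> ('a \<Rightarrow> int) \<Rightarrow> bool" where
  "alexander_numbering D sigma alpha Or A \<longleftrightarrow>
     face_potential D sigma alpha (\<lambda>z. if z \<in> Or then 1 else -1) A"

locale knot_projection =
  fixes D :: "'a set" and sigma alpha :: "'a \<Rightarrow> 'a" and Or :: "'a set"
  assumes knot: "knot_projection_map D sigma alpha"
    and orientation: "Or \<in> orbits (traversal sigma alpha) D"
begin

abbreviation "T \<equiv> traversal sigma alpha"

lemma finite_D: "finite D" using knot by (simp add: knot_projection_map_def)
lemma sigma_in: "z \<in> D \<Longrightarrow> sigma z \<in> D"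
  using knot by (meson bij_betwE knot_projection_map_def)
lemma sigma_inj: "inj_on sigma D"
  using knot unfolding knot_projection_map_def by (blast intro: bij_betw_imp_inj_on)
lemma alpha_in: "z \<in> D \<Longrightarrow> alpha z \<in> D"
  using knot by (meson bij_betwE knot_projection_map_def)
lemma alpha_alpha: "z \<in> D \<Longrightarrow> alpha (alpha z) = z" using knot by (simp add: knot_projection_map_def)
lemma alpha_neq: "z \<in> D \<Longrightarrow> alpha z \<noteq> z" using knot by (simp add: knot_projection_map_def)
lemma sigma4: "z \<in> D \<Longrightarrow> sigma (sigma (sigma (sigma z))) = z"
  using knot by (simp add: knot_projection_map_def eval_nat_numeral)
lemma sigma2_neq: "z \<in> D \<Longrightarrow> sigma (sigma z) \<noteq> z"
  using knot by (simp add: knot_projection_map_def eval_nat_numeral)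
lemma T_simp: "T z = sigma (sigma (alpha z))" by (simp add: traversal_def eval_nat_numeral)

lemma perm_T: "perm_on T D"
  using finite_D sigma_in alpha_in sigma_inj alpha_alpha
  unfolding perm_on_def inj_on_def T_simp by (auto, metis)

lemma comb_map: "comb_map D sigma alpha"
  using finite_D sigma_in sigma_inj alpha_in alpha_alpha alpha_neq
  by (auto simp: comb_map_def perm_on_def)

lemma connected: "map_connected D sigma alpha"
  unfolding map_connected_def
proof (intro allI impI)
  fix S assume sub: "S \<subseteq> D" and "S \<noteq> {}" and cl: "\<forall>z\<in>S. sigma z \<in> S \<and> alpha z \<in> S"
  then obtain d where d: "d \<in> S" by blast
  have "e \<in> S" if e: "e \<in> D" for e
  proof -
    have "(d, e) \<in> ({(x, sigma x) | x. x \<in> D} \<union> {(x, alpha x) | x. x \<in> D})\<^sup>*"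
      using knot d sub e unfolding knot_projection_map_def by blast
    thus ?thesis by (induction rule: rtrancl_induct) (use d cl in auto)
  qed
  thus "S = D" using sub by blast
qed

lemma euler: "euler_char D sigma alpha = 2"
  using knot unfolding euler_char_def knot_projection_map_def by simp

text \<open>The two traversal orbits are the two orientations of the curve, so any map that sends
  every dart out of its own traversal orbit exchanges \<open>Or\<close> with its complement.\<close>
lemma swaps_orientation:
  assumes r_in: "\<And>w. w \<in> D \<Longrightarrow> r w \<in> D" and r_notin: "\<And>w. w \<in> D \<Longrightarrow> r w \<notin> orb T w"
    and z: "z \<in> D"
  shows "r z \<in> Or \<longleftrightarrow> z \<notin> Or"
proof -
  obtain d where d: "d \<in> D" "Or = orb T d" using orientation unfolding orbits_def by auto
  have fin: "finite (orbits T D)" using finite_D unfolding orbits_def by simp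
  have orbs: "orb T z \<in> orbits T D" "orb T (r z) \<in> orbits T D"
    using z r_in[OF z] unfolding orbits_def by auto
  have ne: "orb T z \<noteq> orb T (r z)" using r_notin[OF z] orb_self[of "r z" T] by auto
  show ?thesis
  proof (cases "z \<in> Or")
    case True
    thus ?thesis using perm_on_orb_eq[OF perm_T d(1)] d r_notin[OF z] by auto
  next
    case False
    hence "orb T z \<noteq> Or" using orb_self[of z T] by auto
    hence "orb T (r z) = Or"
      using knot card_mono[OF fin, of "{orb T z, orb T (r z), Or}"] orbs orientation ne
      by (auto simp: knot_projection_map_def card_insert_if split: if_splits)
    thus ?thesis using False orb_self[of "r z" T] by auto
  qed
qed

lemma alpha_swaps_orientation: "z \<in> D \<Longrightarrow> alpha z \<in> Or \<longleftrightarrow> z \<notin> Or"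
proof (rule swaps_orientation[OF alpha_in])
  fix w assume w: "w \<in> D"
  show "alpha w \<notin> orb T w"
  proof (rule reversal_not_in_orb[OF perm_T w])
    fix v assume v: "v \<in> D"
    show "alpha v \<in> D" "alpha v \<noteq> v" using alpha_in alpha_neq v by auto
    show "alpha v \<noteq> T v" using sigma2_neq[OF alpha_in[OF v]] by (simp add: T_simp)
    show "T (alpha (T v)) = alpha v"
      using alpha_alpha sigma4 sigma_in alpha_in v by (simp add: T_simp)
  qed
qed

lemma sigma2_swaps_orientation: "z \<in> D \<Longrightarrow> sigma (sigma z) \<in> Or \<longleftrightarrow> z \<notin> Or"
proof (rule swaps_orientation[where r = "\<lambda>z. sigma (sigma z)"])
  fix w assume w: "w \<in> D"
  show "sigma (sigma w) \<notin> orb T w"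
  proof (rule reversal_not_in_orb[OF perm_T w])
    fix v assume v: "v \<in> D"
    show "sigma (sigma v) \<in> D" "sigma (sigma v) \<noteq> v" using sigma_in sigma2_neq v by auto
    show "sigma (sigma v) \<noteq> T v"
      using sigma_inj sigma_in alpha_in alpha_neq v unfolding T_simp inj_on_def by metis
    show "T (sigma (sigma (T v))) = sigma (sigma v)"
      using alpha_alpha sigma4 sigma_in alpha_in v by (simp add: T_simp)
  qed
qed (use sigma_in in auto)

text \<open>Around a crossing the darts alternate in pairs between \<open>Or\<close> and its complement (by
  \<open>sigma2_swaps_orientation\<close>), so the increments \<open>\<plusminus>1\<close> sum to zero around every vertex.\<close>
lemma alexander_numbering_exists: "\<exists>A. alexander_numbering D sigma alpha Or A"
proof -
  let ?e = "\<lambda>z. if z \<in> Or then 1 else - 1 :: int"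
  define B where "B z = (if z \<in> Or then (if sigma z \<in> Or then -1 else 0)
                         else (if sigma z \<in> Or then 0 else 1 :: int))" for z
  have "\<forall>z\<in>D. ?e (alpha z) = - ?e z" using alpha_swaps_orientation by auto
  moreover have "\<forall>z\<in>D. B (sigma z) = B z + ?e z"
    using sigma2_swaps_orientation unfolding B_def by auto
  ultimately show ?thesis
    unfolding alexander_numbering_def by (rule planar_map_face_potential[OF comb_map connected euler])
qed

end

section \<open>Move B at every crossing\<close>

lemma distinct_first_four_iterates:
  assumes "distinct [f d, f (g d), f (g (g d)), f (g (g (g d)))]" and "i < 4" "j < (4::nat)" "i \<noteq> j"
  shows "f ((g ^^ i) d) \<noteq> f ((g ^^ j) d)"
proof -
  have "i = 0 \<or> i = 1 \<or> i = 2 \<or> i = 3" "j = 0 \<or> j = 1 \<or> j = 2 \<or> j = 3" using assms(2,3) by auto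
  thus ?thesis using assms(1,4) by (auto simp: eval_nat_numeral)
qed

locale alexander_numbered = knot_projection +
  fixes A :: "'a \<Rightarrow> int"
  assumes alexander: "alexander_numbering D sigma alpha Or A"
begin

abbreviation "DB \<equiv> B_darts D sigma Or"
abbreviation "sB \<equiv> B_sigma sigma Or"
abbreviation "aB \<equiv> B_alpha alpha"

definition distinguished :: "'a \<Rightarrow> bool" where
  "distinguished s \<longleftrightarrow> s \<in> D \<and> s \<in> Or \<and> sigma s \<notin> Or"

definition crossing_darts :: "'a \<Rightarrow> ('a + 'a \<times> nat) set" where
  "crossing_darts s = Inl ` {s, sigma s, sigma (sigma s), sigma (sigma (sigma s))} \<union> {Inr (s, k) | k. k < 8}"

text \<open>Labels of the faces of the new projection: an old face keeps its Alexander number, and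
  the two new bigons at a crossing get the tags \<open>1\<close> and \<open>2\<close>.  The darts \<open>Inr (s, k)\<close> with
  \<open>k \<in> {1, 5}\<close> lie in the face below the crossing, those with \<open>k \<in> {3, 6}\<close> in the face above.\<close>
definition face_label :: "'a + 'a \<times> nat \<Rightarrow> int \<times> int" where
  "face_label w = (case w of Inl d \<Rightarrow> (0, A d) | Inr (s, k) \<Rightarrow>
     (if k = 0 \<or> k = 4 then (1, 0) else if k = 2 \<or> k = 7 then (2, 0)
      else if k = 1 \<or> k = 5 then (0, A (sigma (sigma (sigma s)))) else (0, A (sigma s))))"

lemma A_step: "z \<in> D \<Longrightarrow> A (sigma z) = A z + (if z \<in> Or then 1 else -1)"
  using alexander by (simp add: alexander_numbering_def face_potential_def)

lemma A_face: "z \<in> D \<Longrightarrow> A (sigma (alpha z)) = A z"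
  using alexander by (simp add: alexander_numbering_def face_potential_def)

lemma B_darts_Inl: "Inl d \<in> DB \<longleftrightarrow> d \<in> D" by (auto simp: B_darts_def)
lemma B_darts_Inr: "Inr (s, k) \<in> DB \<longleftrightarrow> distinguished s \<and> k < 8"
  by (auto simp: B_darts_def distinguished_def)

context
  fixes s assumes s: "distinguished s"
begin

lemma s_in: "s \<in> D" and s_Or: "s \<in> Or" and sigma_s_Or: "sigma s \<notin> Or"
  using s by (auto simp: distinguished_def)

lemma A_around_crossing:
  "A (sigma s) = A s + 1" "A (sigma (sigma s)) = A s" "A (sigma (sigma (sigma s))) = A s - 1"
  using A_step[OF s_in] A_step[OF sigma_in[OF s_in]] A_step[OF sigma_in[OF sigma_in[OF s_in]]]
    s_Or sigma_s_Or sigma2_swaps_orientation[OF s_in] by simp_all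

lemma B_sigma_at_crossing:
  "sB (Inl s) = Inr (s, 6)"
  "sB (Inl (sigma s)) = Inl (sigma (sigma s))"
  "sB (Inl (sigma (sigma s))) = Inr (s, 1)"
  "sB (Inl (sigma (sigma (sigma s)))) = Inl s"
  "sB (Inr (s, 0)) = Inl (sigma s)"
  "sB (Inr (s, 1)) = Inr (s, 0)"
  "sB (Inr (s, 2)) = Inr (s, 3)"
  "sB (Inr (s, 3)) = Inr (s, 4)"
  "sB (Inr (s, 4)) = Inr (s, 5)"
  "sB (Inr (s, 5)) = Inr (s, 2)"
  "sB (Inr (s, 6)) = Inr (s, 7)"
  "sB (Inr (s, 7)) = Inl (sigma (sigma (sigma s)))"
  using s_Or sigma_s_Or sigma2_swaps_orientation[OF s_in] sigma2_swaps_orientation[OF sigma_in[OF s_in]]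
    sigma4[OF s_in]
  by (simp_all add: B_sigma_def eval_nat_numeral)

lemma face_label_at_crossing:
  "face_label (Inl s) = (0, A s)"
  "face_label (Inl (sigma s)) = (0, A s + 1)"
  "face_label (Inl (sigma (sigma s))) = (0, A s)"
  "face_label (Inl (sigma (sigma (sigma s)))) = (0, A s - 1)"
  "face_label (Inr (s, 0)) = (1, 0)"
  "face_label (Inr (s, 1)) = (0, A s - 1)"
  "face_label (Inr (s, 2)) = (2, 0)"
  "face_label (Inr (s, 3)) = (0, A s + 1)"
  "face_label (Inr (s, 4)) = (1, 0)"
  "face_label (Inr (s, 5)) = (0, A s - 1)"
  "face_label (Inr (s, 6)) = (0, A s + 1)"
  "face_label (Inr (s, 7)) = (2, 0)"
  using A_around_crossing by (simp_all add: face_label_def)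

lemma crossing_darts_cases:
  assumes "d \<in> crossing_darts s"
  shows "d = Inl s \<or> d = Inl (sigma s) \<or> d = Inl (sigma (sigma s)) \<or> d = Inl (sigma (sigma (sigma s))) \<or>
    d = Inr (s, 0) \<or> d = Inr (s, 1) \<or> d = Inr (s, 2) \<or> d = Inr (s, 3) \<or>
    d = Inr (s, 4) \<or> d = Inr (s, 5) \<or> d = Inr (s, 6) \<or> d = Inr (s, 7)"
proof -
  have "\<And>k::nat. k < 8 \<Longrightarrow> k = 0 \<or> k = 1 \<or> k = 2 \<or> k = 3 \<or> k = 4 \<or> k = 5 \<or> k = 6 \<or> k = 7" by auto
  thus ?thesis using assms unfolding crossing_darts_def by blast
qed

lemma crossing_darts_closed:
  assumes "d \<in> crossing_darts s" shows "sB d \<in> crossing_darts s"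
  using crossing_darts_cases[OF assms]
  by (elim disjE) (simp_all add: B_sigma_at_crossing[unfolded One_nat_def] crossing_darts_def)

lemma crossing_darts_subset: "crossing_darts s \<subseteq> DB"
  using s_in sigma_in s unfolding crossing_darts_def B_darts_def distinguished_def by auto

lemma corner_labels_distinct:
  assumes "d \<in> crossing_darts s"
  shows "distinct [face_label d, face_label (sB d), face_label (sB (sB d)), face_label (sB (sB (sB d)))]"
  using crossing_darts_cases[OF assms]
  by (elim disjE) (simp_all add: B_sigma_at_crossing[unfolded One_nat_def]
                                 face_label_at_crossing[unfolded One_nat_def])

end

lemma dart_in_some_crossing:
  assumes d: "d \<in> DB"
  shows "\<exists>s. distinguished s \<and> d \<in> crossing_darts s"
proof (cases d)
  case (Inl e)
  have e: "e \<in> D" using d Inl B_darts_Inl by simp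
  have swap: "sigma (sigma e) \<in> Or \<longleftrightarrow> e \<notin> Or" "sigma (sigma (sigma e)) \<in> Or \<longleftrightarrow> sigma e \<notin> Or"
    using sigma2_swaps_orientation e sigma_in by auto
  have cyc: "sigma (sigma (sigma (sigma e))) = e" using sigma4[OF e] .
  consider "e \<in> Or" "sigma e \<notin> Or" | "sigma e \<in> Or" "sigma (sigma e) \<notin> Or"
    | "sigma (sigma e) \<in> Or" "sigma (sigma (sigma e)) \<notin> Or" | "sigma (sigma (sigma e)) \<in> Or" "e \<notin> Or"
    using swap by blast
  thus ?thesis
  proof cases
    case 1 thus ?thesis using e Inl by (intro exI[of _ e]) (auto simp: distinguished_def crossing_darts_def)
  next
    case 2 thus ?thesis using e sigma_in cyc Inl
      by (intro exI[of _ "sigma e"]) (auto simp: distinguished_def crossing_darts_def)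
  next
    case 3 thus ?thesis using e sigma_in cyc Inl
      by (intro exI[of _ "sigma (sigma e)"]) (auto simp: distinguished_def crossing_darts_def)
  next
    case 4 thus ?thesis using e sigma_in cyc Inl
      by (intro exI[of _ "sigma (sigma (sigma e))"]) (auto simp: distinguished_def crossing_darts_def)
  qed
next
  case (Inr p)
  then obtain s k where "d = Inr (s, k)" by (cases p) auto
  thus ?thesis using d B_darts_Inr by (auto simp: crossing_darts_def)
qed

lemma face_label_step:
  assumes w: "w \<in> DB"
  shows "sB (aB w) \<in> DB \<and> face_label (sB (aB w)) = face_label w"
proof (cases w)
  case (Inl d)
  have d: "d \<in> D" using w Inl B_darts_Inl by simp
  define e where "e = alpha d"
  have e: "e \<in> D" "A (sigma e) = A d" using alpha_in[OF d] A_face[OF d] by (simp_all add: e_def)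
  have aB: "aB w = Inl e" using Inl e_def by (simp add: B_alpha_def)
  consider "e \<in> Or \<longleftrightarrow> sigma e \<in> Or" | "e \<in> Or" "sigma e \<notin> Or" | "e \<notin> Or" "sigma e \<in> Or"
    by blast
  thus ?thesis
  proof cases
    case 1
    hence "sB (Inl e) = Inl (sigma e)" by (auto simp: B_sigma_def)
    thus ?thesis using aB Inl e sigma_in B_darts_Inl by (simp add: face_label_def)
  next
    case 2
    hence "sB (Inl e) = Inr (e, 6)" "distinguished e" using e by (simp_all add: B_sigma_def distinguished_def)
    thus ?thesis using aB Inl e B_darts_Inr by (simp add: face_label_def)
  next
    case 3
    hence "sB (Inl e) = Inr (sigma (sigma e), 1)" by (simp add: B_sigma_def eval_nat_numeral)
    moreover have "distinguished (sigma (sigma e))"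
      using 3 sigma2_swaps_orientation[of e] sigma2_swaps_orientation[of "sigma e"] sigma_in e
      by (simp add: distinguished_def)
    moreover have "sigma (sigma (sigma (sigma (sigma e)))) = sigma e" using sigma4[OF sigma_in[OF e(1)]] .
    ultimately show ?thesis using aB Inl e B_darts_Inr by (simp add: face_label_def)
  qed
next
  case (Inr p)
  then obtain s k where w_eq: "w = Inr (s, k)" by (cases p) auto
  hence s: "distinguished s" and "k < 8" using w B_darts_Inr by auto
  hence "k = 0 \<or> k = 1 \<or> k = 2 \<or> k = 3 \<or> k = 4 \<or> k = 5 \<or> k = 6 \<or> k = 7" by auto
  moreover have "Inl (sigma s) \<in> DB" "Inl (sigma (sigma (sigma s))) \<in> DB"
    using sigma_in s_in[OF s] B_darts_Inl by auto
  ultimately show ?thesis using w_eq s B_sigma_at_crossing[OF s] B_darts_Inr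
    by (elim disjE) (simp_all add: B_alpha_def face_label_def)
qed

lemma reduced_B_map: "reduced_map DB sB aB"
  unfolding reduced_map_def
proof (intro ballI allI impI)
  fix d i j assume d: "d \<in> DB" and ij: "i < (4::nat)" "j < (4::nat)" "i \<noteq> j"
  obtain s where s: "distinguished s" and d_s: "d \<in> crossing_darts s"
    using dart_in_some_crossing[OF d] by blast
  have iter_in: "(sB ^^ n) d \<in> crossing_darts s" for n
    by (induction n) (simp_all add: d_s crossing_darts_closed[OF s])
  have label_orb: "face_label u = face_label ((sB ^^ i) d)" if "u \<in> orb (sB \<circ> aB) ((sB ^^ i) d)" for u
    using orb_invariant[OF _ _ _ that, of DB face_label] face_label_step iter_in crossing_darts_subset[OF s]
    by auto
  have "face_label ((sB ^^ i) d) \<noteq> face_label ((sB ^^ j) d)"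
    using distinct_first_four_iterates[OF corner_labels_distinct[OF s d_s] ij] .
  thus "orb (sB \<circ> aB) ((sB ^^ i) d) \<noteq> orb (sB \<circ> aB) ((sB ^^ j) d)"
    using label_orb orb_self by metis
qed

end

theorem proposition4:
  fixes D :: "'a set" and sigma alpha :: "'a \<Rightarrow> 'a" and Or :: "'a set"
  assumes "knot_projection_map D sigma alpha"
    and "Or \<in> orbits (traversal sigma alpha) D"
  shows "reduced_map (B_darts D sigma Or) (B_sigma sigma Or) (B_alpha alpha)"
proof -
  interpret knot_projection D sigma alpha Or using assms by unfold_locales
  obtain A where "alexander_numbering D sigma alpha Or A" using alexander_numbering_exists by blast
  then interpret alexander_numbered D sigma alpha Or A by unfold_locales
  show ?thesis by (rule reduced_B_map)
qed

end
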